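(* Consider the two-stage robust problem $\min_{x\in\mathcal X}c_1x+\max_{u\in\mathcal U(x)}\min_{y\in\mathcal Y(x)}\hat c_2(u)y$, where $\mathcal U(x)=\{u\in\mathbb R^{n_u}_+: F(x)u\le h+Gx\}$ is nonempty and bounded for every $x\in\mathcal X$, $\mathcal Y(x)=\{y\in\mathbb R^{n_y}_+: B_2y\ge d-B_1x\}$ and $\hat c_2(u)=(\hat Eu)^\intercal+c_2$. It is equivalent to $\min_{x\in\mathcal X,\ y\in\mathcal Y(x)}c_1x+c_2y+\max_{u\in\mathcal U(x)}(\hat Eu)^\intercal y$, which is further equivalent to the single-level problem $\min\{c_1x+c_2y+(h+Gx)^\intercal\lambda:\ x\in\mathcal X,\ y\in\mathcal Y(x),\ F(x)^\intercal\lambda-\hat E^\intercal y\ge 0,\ \lambda\ge 0\}$.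
   Context: $\mathcal X=\{x\in\mathbb Z^{m_x}_+\times\mathbb R^{n_x}_+: Ax\ge b\}$; $F(x)$ is a matrix depending on $x$. The optimal value of an infeasible minimization problem is $+\infty$. Assume the mixed integer program $\min\{c_1x+\hat c_2(u)y: x\in\mathcal X,u\in\mathcal U(x),y\in\mathcal Y(x)\}$ has a finite optimal value (in particular $\mathcal Y(x)\neq\emptyset$ for some $x\in\mathcal X$). Two formulations are called equivalent if they have the same optimal value and any optimal first-stage solution of one is optimal for the other, and vice versa. *)

theory Defs
  imports "HOL-Analysis.Analysis"
begin

text \<open>Vectors are elements of real^'n; the order on vectors is the library's
componentwise order. Matrices are real^'cols^'rows, applied with *v.\<close>

definition Xset :: "real^'x^'a \<Rightarrow> real^'a \<Rightarrow> 'x set \<Rightarrow> (real^'x) set" where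
  "Xset A b Iint = {x. 0 \<le> x \<and> (\<forall>i\<in>Iint. x $ i \<in> \<int>) \<and> b \<le> A *v x}"

definition Uset :: "(real^'x \<Rightarrow> real^'u^'f) \<Rightarrow> real^'f \<Rightarrow> real^'x^'f \<Rightarrow> real^'x \<Rightarrow> (real^'u) set" where
  "Uset F h G x = {u. 0 \<le> u \<and> F x *v u \<le> h + G *v x}"

definition Yset :: "real^'x^'b \<Rightarrow> real^'y^'b \<Rightarrow> real^'b \<Rightarrow> real^'x \<Rightarrow> (real^'y) set" where
  "Yset B1 B2 d x = {y. 0 \<le> y \<and> d - B1 *v x \<le> B2 *v y}"

text \<open>c2hat(u) = (E u)^T + c2, stored as a (column) vector; c2hat(u) y = c2hat u \<bullet> y.\<close>
definition c2hat :: "real^'u^'y \<Rightarrow> real^'y \<Rightarrow> real^'u \<Rightarrow> real^'y" where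
  "c2hat E c2 u = E *v u + c2"

text \<open>Optimal value of a minimisation problem (infeasible = +infinity).\<close>
definition optval :: "'p set \<Rightarrow> ('p \<Rightarrow> ereal) \<Rightarrow> ereal" where
  "optval S f = (INF p\<in>S. f p)"

text \<open>Feasible solutions are pairs (first-stage x, remaining variables z);
x is an optimal first-stage solution if it is part of an optimal solution.\<close>
definition fs_optimal :: "('x \<times> 'z) set \<Rightarrow> ('x \<times> 'z \<Rightarrow> ereal) \<Rightarrow> 'x \<Rightarrow> bool" where
  "fs_optimal S f x \<longleftrightarrow> (\<exists>z. (x, z) \<in> S \<and> f (x, z) = optval S f)"

definition equivalent_form ::
  "('x \<times> 'z) set \<Rightarrow> ('x \<times> 'z \<Rightarrow> ereal) \<Rightarrow> ('x \<times> 'w) set \<Rightarrow> ('x \<times> 'w \<Rightarrow> ereal) \<Rightarrow> bool" where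
  "equivalent_form S f T g \<longleftrightarrow>
     optval S f = optval T g \<and> (\<forall>x. fs_optimal S f x \<longleftrightarrow> fs_optimal T g x)"

end

theory Submission
  imports Defs
begin

text \<open>
  For a fixed first stage x, the adversary's problem max {(E u) y : u \<in> U(x)} is a feasible,
  bounded LP; by LP duality it equals min {(h + G x) \<lambda> : F(x)^T \<lambda> \<ge> E^T y, \<lambda> \<ge> 0}
  and the minimum is attained, which gives the single-level form.
  For the first equivalence only min_y max_u \<le> max_u min_y c2hat(u) y needs proof. Strong
  duality for the joint LP of minimising c2 y + (h + G x) \<lambda> over y \<in> Y(x) and dual feasible
  \<lambda> yields a dual solution (\<mu>, u) with u \<in> U(x), and weak duality in y bounds its value
  by min_y c2hat(u) y.
  LP duality itself comes from separating a point from a finitely generated, hence closed,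
  convex cone.
\<close>

lemma nonneg_inner_mono:
  fixes l :: "real^'n"
  shows "0 \<le> l \<Longrightarrow> x \<le> y \<Longrightarrow> l \<bullet> x \<le> l \<bullet> y"
  unfolding inner_vec_def less_eq_vec_def by (auto intro!: sum_mono mult_left_mono)

lemma inner_transpose_matrix: "(transpose A *v l) \<bullet> u = l \<bullet> (A *v (u :: real^_))"
  by (simp add: dot_lmul_matrix)

lemma inner_matrix_vector_transpose: "(A *v u) \<bullet> l = (transpose A *v l) \<bullet> (u :: real^_)"
  by (metis inner_transpose_matrix inner_commute)

(* keep products with transposed matrices in the form used by the statement *)
declare transpose_matrix_vector [simp del]

lemma vec_diff_nonneg_iff: "0 \<le> x - y \<longleftrightarrow> y \<le> (x :: real^'n)"
  by (simp add: less_eq_vec_def)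

lemma matrix_vector_mult_uminus_left: "(- A) *v x = - (A *v (x :: 'a::ring_1^_))"
  by (simp add: vec_eq_iff matrix_vector_mult_def sum_negf)

lemma transpose_uminus: "transpose (- A) = - transpose A"
  by (simp add: vec_eq_iff transpose_def)

lemma transpose_zero [simp]: "transpose 0 = 0"
  by (simp add: vec_eq_iff transpose_def)

lemma convex_cone_nonneg_vec: "convex_cone {x :: real^'n. 0 \<le> x}"
  by (auto simp: convex_cone_iff less_eq_vec_def)

section \<open>Linear programming duality\<close>

lemma convex_cone_hull_separation:
  fixes S :: "'a::euclidean_space set"
  assumes "finite S" "z \<notin> convex_cone hull S"
  obtains a where "\<And>x. x \<in> S \<Longrightarrow> 0 \<le> a \<bullet> x" "a \<bullet> z < 0"
proof -
  obtain a \<beta> where "a \<bullet> z < \<beta>" and sep: "\<And>x. x \<in> convex_cone hull S \<Longrightarrow> \<beta> < a \<bullet> x"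
    using separating_hyperplane_closed_point[OF convex_convex_cone_hull
        closed_convex_cone_hull[OF assms(1)] assms(2)] by auto
  have "\<beta> < 0"
    using sep[OF convex_cone_hull_contains_0] by simp
  have nonneg: "0 \<le> a \<bullet> x" if "x \<in> convex_cone hull S" for x
  proof (rule ccontr)
    assume "\<not> 0 \<le> a \<bullet> x"
    then have "(\<beta> / (a \<bullet> x)) *\<^sub>R x \<in> convex_cone hull S"
      using \<open>\<beta> < 0\<close> that by (intro convex_cone_hull_mul) (auto simp: divide_nonpos_neg)
    from sep[OF this] show False
      using \<open>\<not> 0 \<le> a \<bullet> x\<close> by simp
  qed
  show thesis
  proof (rule that)
    show "0 \<le> a \<bullet> x" if "x \<in> S" for x
      using nonneg[OF hull_subset[THEN subsetD, OF that]] .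
    show "a \<bullet> z < 0"
      using \<open>a \<bullet> z < \<beta>\<close> \<open>\<beta> < 0\<close> by simp
  qed
qed

lemma lp_weak_duality:
  fixes A :: "real^'n^'m"
  assumes "0 \<le> u" "A *v u \<le> b" "0 \<le> l" "c \<le> transpose A *v l"
  shows "c \<bullet> u \<le> b \<bullet> l"
proof -
  have "c \<bullet> u \<le> (transpose A *v l) \<bullet> u"
    using nonneg_inner_mono[OF assms(1,4)] by (simp add: inner_commute)
  also have "\<dots> = l \<bullet> (A *v u)"
    by (rule inner_transpose_matrix)
  also have "\<dots> \<le> b \<bullet> l"
    using nonneg_inner_mono[OF assms(3,2)] by (simp add: inner_commute)
  finally show ?thesis .
qed

lemma lp_recession_direction:
  fixes A :: "real^'n^'m"
  assumes feasible: "0 \<le> u0" "A *v u0 \<le> b"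
    and bounded: "\<And>u. 0 \<le> u \<Longrightarrow> A *v u \<le> b \<Longrightarrow> c \<bullet> u \<le> M"
    and v: "0 \<le> v" "A *v v \<le> 0"
  shows "c \<bullet> v \<le> 0"
proof (rule ccontr)
  assume "\<not> c \<bullet> v \<le> 0"
  define t where "t = (M - c \<bullet> u0) / (c \<bullet> v) + 1"
  have "0 \<le> t"
    using bounded[OF feasible] \<open>\<not> c \<bullet> v \<le> 0\<close> by (simp add: t_def)
  have "0 \<le> u0 + t *\<^sub>R v"
    using feasible(1) v(1) \<open>0 \<le> t\<close> by (simp add: less_eq_vec_def)
  moreover have "A *v (u0 + t *\<^sub>R v) \<le> b"
    unfolding less_eq_vec_def
  proof
    fix i
    have "t * (A *v v) $ i \<le> 0"
      using v(2) \<open>0 \<le> t\<close> by (simp add: less_eq_vec_def mult_nonneg_nonpos)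
    then show "(A *v (u0 + t *\<^sub>R v)) $ i \<le> b $ i"
      using feasible(2) by (simp add: less_eq_vec_def matrix_vector_right_distrib
          matrix_vector_mult_scaleR add.commute add_decreasing2)
  qed
  ultimately have "c \<bullet> u0 + t * (c \<bullet> v) \<le> M"
    using bounded by (fastforce simp: inner_add_right)
  moreover have "c \<bullet> u0 + t * (c \<bullet> v) = M + c \<bullet> v"
    using \<open>\<not> c \<bullet> v \<le> 0\<close> by (simp add: t_def field_simps)
  ultimately show False
    using \<open>\<not> c \<bullet> v \<le> 0\<close> by simp
qed

lemma lp_bound_homogeneous:
  fixes A :: "real^'n^'m"
  assumes feasible: "0 \<le> u0" "A *v u0 \<le> b"
    and bounded: "\<And>u. 0 \<le> u \<Longrightarrow> A *v u \<le> b \<Longrightarrow> c \<bullet> u \<le> M"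
    and v: "0 \<le> \<sigma>" "0 \<le> v" "A *v v \<le> \<sigma> *\<^sub>R b"
  shows "c \<bullet> v \<le> \<sigma> * M"
proof (cases "\<sigma> = 0")
  case True
  then show ?thesis
    using lp_recession_direction[OF feasible bounded v(2)] v(3) by simp
next
  case False
  with v(1) have "0 < \<sigma>"
    by simp
  have scaled: "0 \<le> (1 / \<sigma>) *\<^sub>R v" "A *v ((1 / \<sigma>) *\<^sub>R v) \<le> b"
    using v(2,3) \<open>0 < \<sigma>\<close>
    by (auto simp: less_eq_vec_def matrix_vector_mult_scaleR pos_divide_le_eq mult.commute)
  have "c \<bullet> v = \<sigma> * (c \<bullet> ((1 / \<sigma>) *\<^sub>R v))"
    using False by simp
  also have "\<dots> \<le> \<sigma> * M"
    using bounded[OF scaled] v(1) by (rule mult_left_mono)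
  finally show ?thesis .
qed

text \<open>The pairs (c, M) admitting a dual solution l of value at most M; w and r are slacks.\<close>

definition lp_dual_cone :: "real^'n^'m \<Rightarrow> real^'m \<Rightarrow> ((real^'n) \<times> real) set" where
  "lp_dual_cone A b = (\<lambda>(l, w, r). (transpose A *v l - w, b \<bullet> l + r)) `
     ({l. 0 \<le> l} \<times> {w. 0 \<le> w} \<times> {r. 0 \<le> r})"

definition lp_dual_cone_generators :: "real^'n^'m \<Rightarrow> real^'m \<Rightarrow> ((real^'n) \<times> real) set" where
  "lp_dual_cone_generators A b = range (\<lambda>i. (transpose A *v axis i 1, b $ i))
     \<union> range (\<lambda>j. (- axis j 1, 0)) \<union> {(0, 1)}"

lemma convex_cone_lp_dual_cone: "convex_cone (lp_dual_cone A b)"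
proof -
  have "convex_cone ({l::real^'m. 0 \<le> l} \<times> {w::real^'n. 0 \<le> w} \<times> {r::real. 0 \<le> r})"
    by (intro convex_cone_Times convex_cone_nonneg_vec) (auto simp: convex_cone_iff)
  moreover have "linear (\<lambda>(l, w, r). (transpose A *v l - w, b \<bullet> l + r))"
    by (auto simp: linear_iff inner_add_right matrix_vector_right_distrib
        matrix_vector_mult_scaleR algebra_simps)
  ultimately show ?thesis
    unfolding lp_dual_cone_def by (intro convex_cone_linear_image conjI)
qed

lemma convex_cone_hull_lp_dual_cone_generators:
  "convex_cone hull (lp_dual_cone_generators A b) \<subseteq> lp_dual_cone A b"
proof (rule hull_minimal)
  show "convex_cone (lp_dual_cone A b)"
    by (rule convex_cone_lp_dual_cone)
  have unit: "0 \<le> axis i (1::real)" for i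
    by (simp add: less_eq_vec_def axis_def)
  have "(transpose A *v axis i 1, b $ i) \<in> lp_dual_cone A b" for i
    unfolding lp_dual_cone_def using unit
    by (intro image_eqI[of _ _ "(axis i 1, 0, 0)"]) (auto simp: inner_axis)
  moreover have "(- axis j 1, 0) \<in> lp_dual_cone A b" for j
    unfolding lp_dual_cone_def using unit
    by (intro image_eqI[of _ _ "(0, axis j 1, 0)"]) auto
  moreover have "(0, 1) \<in> lp_dual_cone A b"
    unfolding lp_dual_cone_def by (intro image_eqI[of _ _ "(0, 0, 1)"]) auto
  ultimately show "lp_dual_cone_generators A b \<subseteq> lp_dual_cone A b"
    unfolding lp_dual_cone_generators_def by blast
qed

lemma lp_dual_cone_separation:
  fixes A :: "real^'n^'m"
  assumes "(c, M) \<notin> lp_dual_cone A b"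
  obtains v \<sigma> where "0 \<le> \<sigma>" "0 \<le> v" "A *v v \<le> \<sigma> *\<^sub>R b" "\<sigma> * M < c \<bullet> v"
proof -
  have "finite (lp_dual_cone_generators A b)"
    unfolding lp_dual_cone_generators_def by simp
  moreover have "(c, M) \<notin> convex_cone hull (lp_dual_cone_generators A b)"
    using assms convex_cone_hull_lp_dual_cone_generators by blast
  ultimately obtain a where sep: "\<And>x. x \<in> lp_dual_cone_generators A b \<Longrightarrow> 0 \<le> a \<bullet> x"
    and "a \<bullet> (c, M) < 0"
    by (rule convex_cone_hull_separation) blast
  obtain v \<sigma> where a: "a = (v, \<sigma>)"
    by fastforce
  show thesis
  proof (rule that)
    show "0 \<le> \<sigma>"
      using sep[of "(0, 1)"] by (simp add: lp_dual_cone_generators_def a)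
    show "0 \<le> - v"
      unfolding less_eq_vec_def
    proof
      fix j
      show "0 $ j \<le> (- v) $ j"
        using sep[of "(- axis j 1, 0)"] by (simp add: lp_dual_cone_generators_def a inner_axis)
    qed
    show "A *v (- v) \<le> \<sigma> *\<^sub>R b"
      unfolding less_eq_vec_def
    proof
      fix i
      have "0 \<le> (transpose A *v axis i 1) \<bullet> v + \<sigma> * b $ i"
        using sep[of "(transpose A *v axis i 1, b $ i)"]
        by (simp add: lp_dual_cone_generators_def a inner_commute)
      then show "(A *v (- v)) $ i \<le> (\<sigma> *\<^sub>R b) $ i"
        unfolding inner_transpose_matrix by (simp add: inner_axis' matrix_vector_mult_def sum_negf)
    qed
    show "\<sigma> * M < c \<bullet> (- v)"
      using \<open>a \<bullet> (c, M) < 0\<close> by (simp add: a inner_commute mult.commute)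
  qed
qed

lemma lp_dual_certificate:
  fixes A :: "real^'n^'m"
  assumes feasible: "0 \<le> u0" "A *v u0 \<le> b"
    and bounded: "\<And>u. 0 \<le> u \<Longrightarrow> A *v u \<le> b \<Longrightarrow> c \<bullet> u \<le> M"
  obtains l where "0 \<le> l" "c \<le> transpose A *v l" "b \<bullet> l \<le> M"
proof -
  have "(c, M) \<in> lp_dual_cone A b"
  proof (rule ccontr)
    assume "(c, M) \<notin> lp_dual_cone A b"
    then obtain v \<sigma> where "0 \<le> \<sigma>" "0 \<le> v" "A *v v \<le> \<sigma> *\<^sub>R b" "\<sigma> * M < c \<bullet> v"
      by (rule lp_dual_cone_separation)
    with lp_bound_homogeneous[OF feasible bounded] show False
      by force
  qed
  then obtain l w r where "0 \<le> l" "0 \<le> w" "0 \<le> r"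
    and "c = transpose A *v l - w" "M = b \<bullet> l + r"
    unfolding lp_dual_cone_def by auto
  then show thesis
    using that[of l] by (simp add: less_eq_vec_def)
qed

lemma lp_strong_duality:
  fixes A :: "real^'n^'m"
  assumes feasible: "0 \<le> u0" "A *v u0 \<le> b"
    and bounded: "\<And>u. 0 \<le> u \<Longrightarrow> A *v u \<le> b \<Longrightarrow> c \<bullet> u \<le> M"
  obtains u l where "0 \<le> u" "A *v u \<le> b" "0 \<le> l" "c \<le> transpose A *v l" "b \<bullet> l \<le> c \<bullet> u"
proof -
  define opt where "opt = (SUP u\<in>{u. 0 \<le> u \<and> A *v u \<le> b}. c \<bullet> u)"
  have le_opt: "c \<bullet> u \<le> opt" if "0 \<le> u" "A *v u \<le> b" for u
    unfolding opt_def using that bounded by (intro cSUP_upper bdd_aboveI2) auto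
  obtain l where l: "0 \<le> l" "c \<le> transpose A *v l" "b \<bullet> l \<le> opt"
    using lp_dual_certificate[OF feasible le_opt] by blast
  \<comment> \<open>the dual, as a maximisation of (- b) \<bullet> l', is bounded by - opt; a dual solution
    for it is a primal solution of value at least opt\<close>
  have dual_bounded: "(- b) \<bullet> l' \<le> - opt"
    if "0 \<le> l'" "(- transpose A) *v l' \<le> - c" for l'
  proof -
    have "c \<le> transpose A *v l'"
      using that(2) by (simp add: matrix_vector_mult_uminus_left less_eq_vec_def)
    then have "opt \<le> b \<bullet> l'"
      unfolding opt_def using feasible that(1)
      by (intro cSUP_least) (auto intro: lp_weak_duality[where A = A])
    then show ?thesis
      by simp
  qed
  have "(- transpose A) *v l \<le> - c"
    using l(2) by (simp add: matrix_vector_mult_uminus_left less_eq_vec_def)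
  then obtain u where "0 \<le> u" "- b \<le> transpose (- transpose A) *v u" "(- c) \<bullet> u \<le> - opt"
    using lp_dual_certificate[OF l(1) _ dual_bounded] by blast
  then have "A *v u \<le> b" "opt \<le> c \<bullet> u"
    by (simp_all add: transpose_uminus matrix_vector_mult_uminus_left less_eq_vec_def)
  with \<open>0 \<le> u\<close> l show thesis
    using that by fastforce
qed

section \<open>Block vectors and matrices\<close>

definition vec_join :: "'a^'m \<Rightarrow> 'a^'n \<Rightarrow> 'a^('m + 'n)" where
  "vec_join x y = (\<chi> k. case k of Inl i \<Rightarrow> x $ i | Inr j \<Rightarrow> y $ j)"

definition block_matrix ::
  "'a^'n^'m \<Rightarrow> 'a^'q^'m \<Rightarrow> 'a^'n^'p \<Rightarrow> 'a^'q^'p \<Rightarrow> 'a^('n + 'q)^('m + 'p)" where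
  "block_matrix P Q R S =
     (\<chi> k. case k of Inl i \<Rightarrow> vec_join (P $ i) (Q $ i) | Inr i \<Rightarrow> vec_join (R $ i) (S $ i))"

lemma vec_join_nth [simp]:
  "vec_join x y $ Inl i = x $ i"
  "vec_join x y $ Inr j = y $ j"
  by (simp_all add: vec_join_def)

lemma vec_join_cases:
  obtains x y where "z = vec_join x y"
proof
  show "z = vec_join (\<chi> i. z $ Inl i) (\<chi> j. z $ Inr j)"
    by (simp add: vec_eq_iff split_sum_all)
qed

lemma vec_join_le_iff [simp]: "vec_join x y \<le> vec_join x' y' \<longleftrightarrow> x \<le> x' \<and> y \<le> y'"
  by (simp add: less_eq_vec_def split_sum_all)

lemma vec_join_nonneg_iff [simp]: "0 \<le> vec_join x y \<longleftrightarrow> 0 \<le> x \<and> 0 \<le> y"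
  by (simp add: less_eq_vec_def split_sum_all)

lemma sum_UNIV_sum_type:
  fixes f :: "'a::finite + 'b::finite \<Rightarrow> 'c::comm_monoid_add"
  shows "(\<Sum>k\<in>UNIV. f k) = (\<Sum>i\<in>UNIV. f (Inl i)) + (\<Sum>j\<in>UNIV. f (Inr j))"
  using sum.Plus[of UNIV UNIV f] by (simp add: comp_def)

lemma inner_vec_join [simp]: "vec_join x y \<bullet> vec_join x' y' = x \<bullet> x' + (y \<bullet> (y' :: real^_))"
  by (simp add: inner_vec_def sum_UNIV_sum_type)

lemma block_matrix_vector_mult [simp]:
  "block_matrix P Q R S *v vec_join x y = vec_join (P *v x + Q *v y) (R *v x + S *v y)"
  by (simp add: vec_eq_iff block_matrix_def matrix_vector_mult_def sum_UNIV_sum_type split: sum.split)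

lemma transpose_block_matrix [simp]:
  "transpose (block_matrix P Q R S) = block_matrix (transpose P) (transpose R) (transpose Q) (transpose S)"
  by (simp add: vec_eq_iff block_matrix_def transpose_def split: sum.split)

section \<open>The recourse problem for a fixed first stage\<close>

lemma worst_case_le_dual_bound:
  fixes F :: "real^'u^'f" and E :: "real^'u^'y"
  assumes "0 \<le> l" "transpose E *v y \<le> transpose F *v l"
  shows "(SUP u\<in>{u. 0 \<le> u \<and> F *v u \<le> g}. ereal ((E *v u) \<bullet> y)) \<le> ereal (g \<bullet> l)"
proof (rule SUP_least)
  fix u
  assume "u \<in> {u. 0 \<le> u \<and> F *v u \<le> g}"
  then have "(transpose E *v y) \<bullet> u \<le> g \<bullet> l"
    using assms by (auto intro: lp_weak_duality[where A = F])
  then show "ereal ((E *v u) \<bullet> y) \<le> ereal (g \<bullet> l)"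
    by (simp add: inner_matrix_vector_transpose[of E u y])
qed

lemma worst_case_dual_attained:
  fixes F :: "real^'u^'f" and E :: "real^'u^'y"
  assumes "0 \<le> u0" "F *v u0 \<le> g" and "bounded {u. 0 \<le> u \<and> F *v u \<le> g}"
  obtains l where "0 \<le> l" "transpose E *v y \<le> transpose F *v l"
    "ereal (g \<bullet> l) \<le> (SUP u\<in>{u. 0 \<le> u \<and> F *v u \<le> g}. ereal ((E *v u) \<bullet> y))"
proof -
  obtain R where R: "\<And>u. 0 \<le> u \<Longrightarrow> F *v u \<le> g \<Longrightarrow> norm u \<le> R"
    using assms(3) unfolding bounded_iff by blast
  have bounded: "(transpose E *v y) \<bullet> u \<le> norm (transpose E *v y) * R"
    if "0 \<le> u" "F *v u \<le> g" for u
  proof -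
    have "(transpose E *v y) \<bullet> u \<le> norm (transpose E *v y) * norm u"
      by (rule norm_cauchy_schwarz)
    also have "\<dots> \<le> norm (transpose E *v y) * R"
      using R[OF that] by (simp add: mult_left_mono)
    finally show ?thesis .
  qed
  obtain u l where u: "0 \<le> u" "F *v u \<le> g"
    and l: "0 \<le> l" "transpose E *v y \<le> transpose F *v l" "g \<bullet> l \<le> (transpose E *v y) \<bullet> u"
    by (rule lp_strong_duality[OF assms(1,2) bounded])
  have "ereal (g \<bullet> l) \<le> ereal ((E *v u) \<bullet> y)"
    using l(3) by (simp add: inner_matrix_vector_transpose[of E u y])
  also have "\<dots> \<le> (SUP u\<in>{u. 0 \<le> u \<and> F *v u \<le> g}. ereal ((E *v u) \<bullet> y))"
    using u by (intro SUP_upper) simp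
  finally show thesis
    using that l(1,2) by blast
qed

lemma recourse_lp_primal_block:
  fixes F :: "real^'u^'f" and B2 :: "real^'y^'b" and E :: "real^'u^'y"
  shows "block_matrix (- B2) 0 (transpose E) (- transpose F) *v vec_join y l \<le> vec_join (- dd) 0
    \<longleftrightarrow> dd \<le> B2 *v y \<and> transpose E *v y \<le> transpose F *v l"
  by (simp add: matrix_vector_mult_uminus_left)

lemma recourse_lp_dual_block:
  fixes F :: "real^'u^'f" and B2 :: "real^'y^'b" and E :: "real^'u^'y"
  shows "vec_join (- c2) (- g) \<le> transpose (block_matrix (- B2) 0 (transpose E) (- transpose F)) *v vec_join \<mu> u
    \<longleftrightarrow> transpose B2 *v \<mu> \<le> E *v u + c2 \<and> F *v u \<le> g"
proof -
  have "vec_join (- c2) (- g) \<le> transpose (block_matrix (- B2) 0 (transpose E) (- transpose F)) *v vec_join \<mu> u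
    \<longleftrightarrow> - c2 \<le> E *v u - transpose B2 *v \<mu> \<and> - g \<le> - (F *v u)"
    by (simp add: transpose_uminus matrix_vector_mult_uminus_left)
  also have "\<dots> \<longleftrightarrow> transpose B2 *v \<mu> \<le> E *v u + c2 \<and> F *v u \<le> g"
    unfolding less_eq_vec_def by (auto simp: le_diff_eq diff_le_eq add.commute)
  finally show ?thesis .
qed

lemma recourse_lp_strong_duality:
  fixes F :: "real^'u^'f" and B2 :: "real^'y^'b" and E :: "real^'u^'y"
  assumes feasible: "0 \<le> y0" "dd \<le> B2 *v y0" "0 \<le> l0" "transpose E *v y0 \<le> transpose F *v l0"
    and bounded: "\<And>y l. 0 \<le> y \<Longrightarrow> dd \<le> B2 *v y \<Longrightarrow> 0 \<le> l \<Longrightarrow>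
        transpose E *v y \<le> transpose F *v l \<Longrightarrow> L \<le> c2 \<bullet> y + g \<bullet> l"
  obtains y l \<mu> u where "0 \<le> y" "dd \<le> B2 *v y" "0 \<le> l" "transpose E *v y \<le> transpose F *v l"
    and "0 \<le> \<mu>" "0 \<le> u" "transpose B2 *v \<mu> \<le> E *v u + c2" "F *v u \<le> g"
    and "c2 \<bullet> y + g \<bullet> l \<le> dd \<bullet> \<mu>"
proof -
  \<comment> \<open>minimising c2 \<bullet> y + g \<bullet> l is maximising c \<bullet> (y, l) subject to A (y, l) \<le> b, y, l \<ge> 0;
    the dual variables are (\<mu>, u)\<close>
  define A where "A = block_matrix (- B2) 0 (transpose E) (- transpose F)"
  define b :: "real^('b + 'u)" where "b = vec_join (- dd) 0"
  define c where "c = vec_join (- c2) (- g)"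
  have objective: "c \<bullet> vec_join y l = - (c2 \<bullet> y + g \<bullet> l)" for y l
    by (simp add: c_def)
  obtain z w where z: "0 \<le> z" "A *v z \<le> b"
    and w: "0 \<le> w" "c \<le> transpose A *v w" and "b \<bullet> w \<le> c \<bullet> z"
  proof (rule lp_strong_duality[of "vec_join y0 l0" A b c "- L"])
    show "0 \<le> vec_join y0 l0" "A *v vec_join y0 l0 \<le> b"
      unfolding A_def b_def recourse_lp_primal_block using feasible by simp_all
    show "c \<bullet> z \<le> - L" if "0 \<le> z" "A *v z \<le> b" for z
    proof -
      obtain y l where zyl: "z = vec_join y l"
        by (rule vec_join_cases)
      have "0 \<le> y" "dd \<le> B2 *v y" "0 \<le> l" "transpose E *v y \<le> transpose F *v l"
        using that unfolding zyl A_def b_def recourse_lp_primal_block by simp_all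
      from bounded[OF this] show ?thesis
        by (simp add: zyl objective)
    qed
  qed
  obtain y l where zyl: "z = vec_join y l"
    by (rule vec_join_cases)
  obtain \<mu> u where w\<mu>u: "w = vec_join \<mu> u"
    by (rule vec_join_cases)
  show thesis
  proof (rule that)
    show "0 \<le> y" "dd \<le> B2 *v y" "0 \<le> l" "transpose E *v y \<le> transpose F *v l"
      using z unfolding zyl A_def b_def recourse_lp_primal_block by simp_all
    show "0 \<le> \<mu>" "0 \<le> u"
      using w(1) by (simp_all add: w\<mu>u)
    show "transpose B2 *v \<mu> \<le> E *v u + c2" "F *v u \<le> g"
      using w(2) unfolding w\<mu>u A_def c_def recourse_lp_dual_block by simp_all
    show "c2 \<bullet> y + g \<bullet> l \<le> dd \<bullet> \<mu>"
      using \<open>b \<bullet> w \<le> c \<bullet> z\<close> by (simp add: w\<mu>u zyl b_def objective)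
  qed
qed

lemma robust_recourse_minimax:
  fixes F :: "real^'u^'f" and B2 :: "real^'y^'b" and E :: "real^'u^'y"
  assumes u0: "0 \<le> u0" "F *v u0 \<le> g" and bounded: "bounded {u. 0 \<le> u \<and> F *v u \<le> g}"
    and y0: "0 \<le> y0" "dd \<le> B2 *v y0"
    and lower: "\<And>y. 0 \<le> y \<Longrightarrow> dd \<le> B2 *v y \<Longrightarrow> L \<le> (E *v u0 + c2) \<bullet> y"
  obtains y where "0 \<le> y" "dd \<le> B2 *v y"
    "ereal (c2 \<bullet> y) + (SUP u\<in>{u. 0 \<le> u \<and> F *v u \<le> g}. ereal ((E *v u) \<bullet> y))
       \<le> (SUP u\<in>{u. 0 \<le> u \<and> F *v u \<le> g}.
             INF y\<in>{y. 0 \<le> y \<and> dd \<le> B2 *v y}. ereal ((E *v u + c2) \<bullet> y))"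
proof -
  obtain l0 where l0: "0 \<le> l0" "transpose E *v y0 \<le> transpose F *v l0"
    by (rule worst_case_dual_attained[OF u0 bounded, where E = E and y = y0]) blast
  have "L \<le> c2 \<bullet> y + g \<bullet> l"
    if "0 \<le> y" "dd \<le> B2 *v y" "0 \<le> l" "transpose E *v y \<le> transpose F *v l" for y l
  proof -
    have "(transpose E *v y) \<bullet> u0 \<le> g \<bullet> l"
      using u0 that(3,4) by (rule lp_weak_duality)
    then show ?thesis
      using lower[OF that(1,2)] by (simp add: inner_add_left inner_matrix_vector_transpose[of E u0 y])
  qed
  then obtain y l \<mu> u where y: "0 \<le> y" "dd \<le> B2 *v y"
    and l: "0 \<le> l" "transpose E *v y \<le> transpose F *v l" and "0 \<le> \<mu>" "0 \<le> u"
    and dual: "transpose B2 *v \<mu> \<le> E *v u + c2" "F *v u \<le> g" and "c2 \<bullet> y + g \<bullet> l \<le> dd \<bullet> \<mu>"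
    using recourse_lp_strong_duality[OF y0 l0] by blast
  have "ereal (c2 \<bullet> y) + (SUP u\<in>{u. 0 \<le> u \<and> F *v u \<le> g}. ereal ((E *v u) \<bullet> y))
      \<le> ereal (c2 \<bullet> y) + ereal (g \<bullet> l)"
    using worst_case_le_dual_bound[OF l] by (rule add_left_mono)
  also have "\<dots> = ereal (c2 \<bullet> y + g \<bullet> l)"
    by simp
  also have "\<dots> \<le> (INF y'\<in>{y. 0 \<le> y \<and> dd \<le> B2 *v y}. ereal ((E *v u + c2) \<bullet> y'))"
  proof (rule INF_greatest)
    fix y'
    assume "y' \<in> {y. 0 \<le> y \<and> dd \<le> B2 *v y}"
    then have "dd \<bullet> \<mu> \<le> (E *v u + c2) \<bullet> y'"
      using \<open>0 \<le> \<mu>\<close> dual(1) by (intro lp_weak_duality[where A = "transpose B2"]) auto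
    with \<open>c2 \<bullet> y + g \<bullet> l \<le> dd \<bullet> \<mu>\<close> show "ereal (c2 \<bullet> y + g \<bullet> l) \<le> ereal ((E *v u + c2) \<bullet> y')"
      by simp
  qed
  also have "\<dots> \<le> (SUP u\<in>{u. 0 \<le> u \<and> F *v u \<le> g}.
             INF y\<in>{y. 0 \<le> y \<and> dd \<le> B2 *v y}. ereal ((E *v u + c2) \<bullet> y))"
    using \<open>0 \<le> u\<close> dual(2) by (intro SUP_upper) simp
  finally show thesis
    using that y by blast
qed

lemma SUP_INF_le_static_recourse:
  assumes "y \<in> Y"
  shows "(SUP u\<in>U. INF y'\<in>Y. ereal ((E *v u + c2) \<bullet> y'))
    \<le> ereal (c2 \<bullet> y) + (SUP u\<in>U. ereal ((E *v u) \<bullet> y))"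
proof (rule SUP_least)
  fix u
  assume "u \<in> U"
  have "(INF y'\<in>Y. ereal ((E *v u + c2) \<bullet> y')) \<le> ereal (c2 \<bullet> y) + ereal ((E *v u) \<bullet> y)"
    using assms by (intro INF_lower2) (auto simp: inner_add_left)
  also have "\<dots> \<le> ereal (c2 \<bullet> y) + (SUP u\<in>U. ereal ((E *v u) \<bullet> y))"
    using \<open>u \<in> U\<close> by (intro add_left_mono SUP_upper)
  finally show "(INF y'\<in>Y. ereal ((E *v u + c2) \<bullet> y')) \<le> \<dots>" .
qed

lemma static_recourse_le_two_stage:
  fixes F :: "real^'x \<Rightarrow> real^'u^'f" and B2 :: "real^'y^'b" and E :: "real^'u^'y"
  assumes U_nonempty: "Uset F h G x \<noteq> {}" and U_bounded: "bounded (Uset F h G x)"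
    and lower: "\<And>u y. u \<in> Uset F h G x \<Longrightarrow> y \<in> Yset B1 B2 d x \<Longrightarrow> L \<le> c2hat E c2 u \<bullet> y"
    and finite: "(SUP u\<in>Uset F h G x. INF y\<in>Yset B1 B2 d x. ereal (c2hat E c2 u \<bullet> y)) \<noteq> \<infinity>"
  obtains y where "y \<in> Yset B1 B2 d x"
    "ereal (c2 \<bullet> y) + (SUP u\<in>Uset F h G x. ereal ((E *v u) \<bullet> y))
      \<le> (SUP u\<in>Uset F h G x. INF y\<in>Yset B1 B2 d x. ereal (c2hat E c2 u \<bullet> y))"
proof -
  obtain u1 where u1: "u1 \<in> Uset F h G x"
    using U_nonempty by blast
  have "Yset B1 B2 d x \<noteq> {}"
  proof
    assume "Yset B1 B2 d x = {}"
    with finite U_nonempty show False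
      by (simp add: SUP_constant top_ereal_def)
  qed
  then obtain y1 where "y1 \<in> Yset B1 B2 d x"
    by blast
  moreover have "L \<le> (E *v u1 + c2) \<bullet> y" if "y \<in> Yset B1 B2 d x" for y
    using lower[OF u1 that] by (simp add: c2hat_def)
  ultimately show thesis
    using robust_recourse_minimax[where F = "F x" and g = "h + G *v x" and dd = "d - B1 *v x"]
      u1 U_bounded that
    unfolding Uset_def Yset_def c2hat_def by blast
qed

section \<open>Equivalent formulations\<close>

lemma optval_le: "p \<in> S \<Longrightarrow> optval S f \<le> f p"
  unfolding optval_def by (rule INF_lower)

lemma optval_empty: "optval {} f = \<infinity>"
  by (simp add: optval_def top_ereal_def)

lemma optval_eq_if_transfer:
  assumes S_to_T: "\<And>x z. (x, z) \<in> S \<Longrightarrow> f (x, z) \<noteq> \<infinity> \<Longrightarrow> \<exists>w. (x, w) \<in> T \<and> g (x, w) \<le> f (x, z)"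
    and T_to_S: "\<And>x w. (x, w) \<in> T \<Longrightarrow> \<exists>z. (x, z) \<in> S \<and> f (x, z) \<le> g (x, w)"
  shows "optval S f = optval T g"
proof (rule antisym)
  show "optval S f \<le> optval T g"
    unfolding optval_def[of T]
  proof (rule INF_greatest)
    fix p
    assume "p \<in> T"
    with T_to_S obtain z where "(fst p, z) \<in> S" "f (fst p, z) \<le> g p"
      by (metis prod.collapse)
    then show "optval S f \<le> g p"
      by (meson optval_le order_trans)
  qed
  show "optval T g \<le> optval S f"
    unfolding optval_def[of S]
  proof (rule INF_greatest)
    fix p
    assume "p \<in> S"
    show "optval T g \<le> f p"
    proof (cases "f p = \<infinity>")
      case False
      with S_to_T \<open>p \<in> S\<close> obtain w where "(fst p, w) \<in> T" "g (fst p, w) \<le> f p"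
        by (metis prod.collapse)
      then show ?thesis
        by (meson optval_le order_trans)
    qed simp
  qed
qed

lemma equivalent_formI:
  assumes finite: "\<exists>p\<in>T. g p \<noteq> \<infinity>"
    and S_to_T: "\<And>x z. (x, z) \<in> S \<Longrightarrow> f (x, z) \<noteq> \<infinity> \<Longrightarrow> \<exists>w. (x, w) \<in> T \<and> g (x, w) \<le> f (x, z)"
    and T_to_S: "\<And>x w. (x, w) \<in> T \<Longrightarrow> \<exists>z. (x, z) \<in> S \<and> f (x, z) \<le> g (x, w)"
  shows "equivalent_form S f T g"
proof -
  have same_value: "optval S f = optval T g"
    using S_to_T T_to_S by (rule optval_eq_if_transfer)
  have "optval T g \<noteq> \<infinity>"
    using finite optval_le by (metis ereal_infty_less_eq(1))
  have "fs_optimal T g x" if "fs_optimal S f x" for x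
  proof -
    from that obtain z where "(x, z) \<in> S" "f (x, z) = optval S f"
      unfolding fs_optimal_def by blast
    with S_to_T \<open>optval T g \<noteq> \<infinity>\<close> same_value obtain w where "(x, w) \<in> T" "g (x, w) \<le> optval T g"
      by metis
    then show ?thesis
      unfolding fs_optimal_def by (metis optval_le antisym)
  qed
  moreover have "fs_optimal S f x" if "fs_optimal T g x" for x
  proof -
    from that obtain w where "(x, w) \<in> T" "g (x, w) = optval T g"
      unfolding fs_optimal_def by blast
    with T_to_S same_value obtain z where "(x, z) \<in> S" "f (x, z) \<le> optval S f"
      by metis
    then show ?thesis
      unfolding fs_optimal_def by (metis optval_le antisym)
  qed
  ultimately show ?thesis
    unfolding equivalent_form_def using same_value by blast
qed

lemma equivalent_form_two_stage_static:
  fixes A :: "real^'x^'a" and b :: "real^'a" and Iint :: "'x set"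
    and F :: "real^'x \<Rightarrow> real^'u^'f" and h :: "real^'f" and G :: "real^'x^'f"
    and B1 :: "real^'x^'b" and B2 :: "real^'y^'b" and d :: "real^'b"
    and c1 :: "real^'x" and c2 :: "real^'y" and E :: "real^'u^'y"
  assumes U_nonempty: "\<And>x. x \<in> Xset A b Iint \<Longrightarrow> Uset F h G x \<noteq> {}"
    and U_bounded: "\<And>x. x \<in> Xset A b Iint \<Longrightarrow> bounded (Uset F h G x)"
    and feasible: "x0 \<in> Xset A b Iint" "y0 \<in> Yset B1 B2 d x0"
    and lower: "\<And>x u y. x \<in> Xset A b Iint \<Longrightarrow> u \<in> Uset F h G x \<Longrightarrow> y \<in> Yset B1 B2 d x \<Longrightarrow>
        r \<le> c1 \<bullet> x + c2hat E c2 u \<bullet> y"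
  shows "equivalent_form
       (Xset A b Iint \<times> {()})
       (\<lambda>(x, _). ereal (c1 \<bullet> x) +
          (SUP u\<in>Uset F h G x. INF y\<in>Yset B1 B2 d x. ereal (c2hat E c2 u \<bullet> y)))
       {(x, y). x \<in> Xset A b Iint \<and> y \<in> Yset B1 B2 d x}
       (\<lambda>(x, y). ereal (c1 \<bullet> x + c2 \<bullet> y) + (SUP u\<in>Uset F h G x. ereal ((E *v u) \<bullet> y)))"
proof (rule equivalent_formI, goal_cases)
  case 1
  obtain u0 where "u0 \<in> Uset F h G x0"
    using U_nonempty[OF feasible(1)] by blast
  then obtain l0 where "0 \<le> l0" "transpose E *v y0 \<le> transpose (F x0) *v l0"
    using worst_case_dual_attained[of u0 "F x0" "h + G *v x0" E y0] U_bounded[OF feasible(1)]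
    unfolding Uset_def by blast
  then have "(SUP u\<in>Uset F h G x0. ereal ((E *v u) \<bullet> y0)) \<le> ereal ((h + G *v x0) \<bullet> l0)"
    unfolding Uset_def by (rule worst_case_le_dual_bound)
  then show ?case
    using feasible by (intro bexI[of _ "(x0, y0)"]) auto
next
  case (2 x z)
  then have x: "x \<in> Xset A b Iint"
    and finite: "(SUP u\<in>Uset F h G x. INF y\<in>Yset B1 B2 d x. ereal (c2hat E c2 u \<bullet> y)) \<noteq> \<infinity>"
    by auto
  have "r - c1 \<bullet> x \<le> c2hat E c2 u \<bullet> y" if "u \<in> Uset F h G x" "y \<in> Yset B1 B2 d x" for u y
    using lower[OF x that] by simp
  then obtain y where y: "y \<in> Yset B1 B2 d x"
    and minimax: "ereal (c2 \<bullet> y) + (SUP u\<in>Uset F h G x. ereal ((E *v u) \<bullet> y))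
      \<le> (SUP u\<in>Uset F h G x. INF y\<in>Yset B1 B2 d x. ereal (c2hat E c2 u \<bullet> y))"
    by (rule static_recourse_le_two_stage[OF U_nonempty[OF x] U_bounded[OF x] _ finite]) blast
  have "ereal (c1 \<bullet> x + c2 \<bullet> y) + (SUP u\<in>Uset F h G x. ereal ((E *v u) \<bullet> y))
      = ereal (c1 \<bullet> x) + (ereal (c2 \<bullet> y) + (SUP u\<in>Uset F h G x. ereal ((E *v u) \<bullet> y)))"
    by (simp add: add.assoc[symmetric])
  also have "\<dots> \<le> ereal (c1 \<bullet> x) +
      (SUP u\<in>Uset F h G x. INF y\<in>Yset B1 B2 d x. ereal (c2hat E c2 u \<bullet> y))"
    using minimax by (rule add_left_mono)
  finally show ?case
    using x y by (intro exI[of _ y]) simp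
next
  case (3 x y)
  then have "ereal (c1 \<bullet> x) +
      (SUP u\<in>Uset F h G x. INF y'\<in>Yset B1 B2 d x. ereal ((E *v u + c2) \<bullet> y'))
      \<le> ereal (c1 \<bullet> x) + (ereal (c2 \<bullet> y) + (SUP u\<in>Uset F h G x. ereal ((E *v u) \<bullet> y)))"
    by (intro add_left_mono SUP_INF_le_static_recourse) auto
  then show ?case
    using 3 by (auto simp: c2hat_def add.assoc[symmetric])
qed

lemma equivalent_form_static_single_level:
  fixes A :: "real^'x^'a" and b :: "real^'a" and Iint :: "'x set"
    and F :: "real^'x \<Rightarrow> real^'u^'f" and h :: "real^'f" and G :: "real^'x^'f"
    and B1 :: "real^'x^'b" and B2 :: "real^'y^'b" and d :: "real^'b"
    and c1 :: "real^'x" and c2 :: "real^'y" and E :: "real^'u^'y"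
  assumes U_nonempty: "\<And>x. x \<in> Xset A b Iint \<Longrightarrow> Uset F h G x \<noteq> {}"
    and U_bounded: "\<And>x. x \<in> Xset A b Iint \<Longrightarrow> bounded (Uset F h G x)"
    and feasible: "x0 \<in> Xset A b Iint" "y0 \<in> Yset B1 B2 d x0"
  shows "equivalent_form
       {(x, y). x \<in> Xset A b Iint \<and> y \<in> Yset B1 B2 d x}
       (\<lambda>(x, y). ereal (c1 \<bullet> x + c2 \<bullet> y) + (SUP u\<in>Uset F h G x. ereal ((E *v u) \<bullet> y)))
       {(x, (y, lam)). x \<in> Xset A b Iint \<and> y \<in> Yset B1 B2 d x
          \<and> 0 \<le> transpose (F x) *v lam - transpose E *v y \<and> 0 \<le> lam}
       (\<lambda>(x, (y, lam)). ereal (c1 \<bullet> x + c2 \<bullet> y + (h + G *v x) \<bullet> lam))"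
proof -
  have dual_attained: "\<exists>lam. 0 \<le> lam \<and> 0 \<le> transpose (F x) *v lam - transpose E *v y \<and>
      ereal ((h + G *v x) \<bullet> lam) \<le> (SUP u\<in>Uset F h G x. ereal ((E *v u) \<bullet> y))"
    if x: "x \<in> Xset A b Iint" for x y
  proof -
    obtain u0 where "u0 \<in> Uset F h G x"
      using U_nonempty[OF x] by blast
    then show ?thesis
      using worst_case_dual_attained[of u0 "F x" "h + G *v x" E y] U_bounded[OF x]
      unfolding Uset_def vec_diff_nonneg_iff by blast
  qed
  have weak_duality: "(SUP u\<in>Uset F h G x. ereal ((E *v u) \<bullet> y)) \<le> ereal ((h + G *v x) \<bullet> lam)"
    if "0 \<le> lam" "0 \<le> transpose (F x) *v lam - transpose E *v y" for x y lam
    using that unfolding Uset_def vec_diff_nonneg_iff by (rule worst_case_le_dual_bound)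
  show ?thesis
  proof (rule equivalent_formI, goal_cases)
    case 1
    obtain lam where "0 \<le> lam" "0 \<le> transpose (F x0) *v lam - transpose E *v y0"
      using dual_attained[OF feasible(1)] by blast
    then show ?case
      using feasible by (intro bexI[of _ "(x0, y0, lam)"]) auto
  next
    case (2 x y)
    then obtain lam where "0 \<le> lam" "0 \<le> transpose (F x) *v lam - transpose E *v y"
      and "ereal ((h + G *v x) \<bullet> lam) \<le> (SUP u\<in>Uset F h G x. ereal ((E *v u) \<bullet> y))"
      using dual_attained by blast
    then show ?case
      using 2 by (intro exI[of _ "(y, lam)"]) (auto simp flip: plus_ereal.simps intro: add_left_mono)
  next
    case (3 x w)
    then obtain y lam where w: "w = (y, lam)" and x: "x \<in> Xset A b Iint" "y \<in> Yset B1 B2 d x"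
      and "0 \<le> lam" "0 \<le> transpose (F x) *v lam - transpose E *v y"
      by auto
    then have "ereal (c1 \<bullet> x + c2 \<bullet> y) + (SUP u\<in>Uset F h G x. ereal ((E *v u) \<bullet> y))
        \<le> ereal (c1 \<bullet> x + c2 \<bullet> y) + ereal ((h + G *v x) \<bullet> lam)"
      by (intro add_left_mono weak_duality)
    then show ?case
      using x by (intro exI[of _ y]) (simp add: w)
  qed
qed

theorem proposition5:
  fixes A :: "real^'x^'a" and b :: "real^'a" and Iint :: "'x set"
    and F :: "real^'x \<Rightarrow> real^'u^'f" and h :: "real^'f" and G :: "real^'x^'f"
    and B1 :: "real^'x^'b" and B2 :: "real^'y^'b" and d :: "real^'b"
    and c1 :: "real^'x" and c2 :: "real^'y" and E :: "real^'u^'y"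
  assumes U_nonempty: "\<And>x. x \<in> Xset A b Iint \<Longrightarrow> Uset F h G x \<noteq> {}"
    and U_bounded: "\<And>x. x \<in> Xset A b Iint \<Longrightarrow> bounded (Uset F h G x)"
    and MIP_finite: "\<exists>r::real. optval {(x, (u, y)). x \<in> Xset A b Iint \<and> u \<in> Uset F h G x \<and> y \<in> Yset B1 B2 d x}
                        (\<lambda>(x, (u, y)). ereal (c1 \<bullet> x + c2hat E c2 u \<bullet> y)) = ereal r"
  shows
    "equivalent_form
       (Xset A b Iint \<times> {()})
       (\<lambda>(x, _). ereal (c1 \<bullet> x) +
          (SUP u\<in>Uset F h G x. INF y\<in>Yset B1 B2 d x. ereal (c2hat E c2 u \<bullet> y)))
       {(x, y). x \<in> Xset A b Iint \<and> y \<in> Yset B1 B2 d x}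
       (\<lambda>(x, y). ereal (c1 \<bullet> x + c2 \<bullet> y) + (SUP u\<in>Uset F h G x. ereal ((E *v u) \<bullet> y)))
     \<and> equivalent_form
       {(x, y). x \<in> Xset A b Iint \<and> y \<in> Yset B1 B2 d x}
       (\<lambda>(x, y). ereal (c1 \<bullet> x + c2 \<bullet> y) + (SUP u\<in>Uset F h G x. ereal ((E *v u) \<bullet> y)))
       {(x, (y, lam)). x \<in> Xset A b Iint \<and> y \<in> Yset B1 B2 d x
          \<and> 0 \<le> transpose (F x) *v lam - transpose E *v y \<and> 0 \<le> lam}
       (\<lambda>(x, (y, lam)). ereal (c1 \<bullet> x + c2 \<bullet> y + (h + G *v x) \<bullet> lam))"
proof -
  let ?S = "{(x, (u, y)). x \<in> Xset A b Iint \<and> u \<in> Uset F h G x \<and> y \<in> Yset B1 B2 d x}"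
  let ?f = "\<lambda>(x, (u, y)). ereal (c1 \<bullet> x + c2hat E c2 u \<bullet> y)"
  obtain r where r: "optval ?S ?f = ereal r"
    using MIP_finite by blast
  then have "?S \<noteq> {}"
    by (metis optval_empty PInfty_neq_ereal(2))
  then obtain x0 y0 where x0: "x0 \<in> Xset A b Iint" "y0 \<in> Yset B1 B2 d x0"
    by blast
  have lower: "r \<le> c1 \<bullet> x + c2hat E c2 u \<bullet> y"
    if "x \<in> Xset A b Iint" "u \<in> Uset F h G x" "y \<in> Yset B1 B2 d x" for x u y
    using optval_le[of "(x, (u, y))" ?S ?f] that r by simp
  show ?thesis
    using equivalent_form_two_stage_static[OF U_nonempty U_bounded x0 lower]
      equivalent_form_static_single_level[OF U_nonempty U_bounded x0]
    by blast
qed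

end
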